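(* Let $X$ be a set and let $A$ and $B$ be Banach algebras of complex-valued functions on $X$ (with pointwise operations), each containing the constant functions on $X$. Let $\psi:A\to B$ be a continuous algebra homomorphism and $\varphi\in\Delta(B)$. If $f\in A$ satisfies $P(f)=0$ for some nonzero polynomial $P$ in one complex variable, then $D(f)=0$ for every $(\varphi,\psi)$-point derivation $D$ on $A$.
   Context: $\Delta(B)$ denotes the set of all nonzero multiplicative linear functionals on $B$. A bounded linear functional $D$ on $A$ is a $(\varphi,\psi)$-point derivation if $D(ab)=\varphi(\psi(a))\,D(b)+\varphi(\psi(b))\,D(a)$ for all $a,b\in A$. For $P(z)=\sum_{k=0}^{n}c_kz^k$, $P(f)=\sum_{k=0}^n c_k f^k$ with $f^0$ the constant function $1$. *)

theory Defs
  imports "HOL-Analysis.Analysis" "HOL-Computational_Algebra.Polynomial"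
begin

text \<open>Complex-valued functions on a set X, modelled as the type 'x; operations are pointwise.\<close>

definition banach_function_algebra ::
  "('x \<Rightarrow> complex) set \<Rightarrow> (('x \<Rightarrow> complex) \<Rightarrow> real) \<Rightarrow> bool" where
  "banach_function_algebra A nA \<longleftrightarrow>
     (\<forall>c::complex. (\<lambda>x. c) \<in> A) \<and>
     (\<forall>f\<in>A. \<forall>g\<in>A. (\<lambda>x. f x + g x) \<in> A) \<and>
     (\<forall>c::complex. \<forall>f\<in>A. (\<lambda>x. c * f x) \<in> A) \<and>
     (\<forall>f\<in>A. \<forall>g\<in>A. (\<lambda>x. f x * g x) \<in> A) \<and>
     (\<forall>f\<in>A. 0 \<le> nA f) \<and>
     (\<forall>f\<in>A. nA f = 0 \<longleftrightarrow> f = (\<lambda>x. 0)) \<and>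
     (\<forall>f\<in>A. \<forall>g\<in>A. nA (\<lambda>x. f x + g x) \<le> nA f + nA g) \<and>
     (\<forall>c::complex. \<forall>f\<in>A. nA (\<lambda>x. c * f x) = cmod c * nA f) \<and>
     (\<forall>f\<in>A. \<forall>g\<in>A. nA (\<lambda>x. f x * g x) \<le> nA f * nA g) \<and>
     (\<forall>u::nat \<Rightarrow> ('x \<Rightarrow> complex). (\<forall>n. u n \<in> A) \<longrightarrow>
        (\<forall>e>0. \<exists>N. \<forall>m\<ge>N. \<forall>n\<ge>N. nA (\<lambda>x. u m x - u n x) < e) \<longrightarrow>
        (\<exists>g\<in>A. \<forall>e>0. \<exists>N. \<forall>n\<ge>N. nA (\<lambda>x. u n x - g x) < e))"

definition alg_hom ::
  "('x \<Rightarrow> complex) set \<Rightarrow> (('x \<Rightarrow> complex) \<Rightarrow> ('y \<Rightarrow> complex)) \<Rightarrow> bool" where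
  "alg_hom A \<psi> \<longleftrightarrow>
     (\<forall>f\<in>A. \<forall>g\<in>A. \<psi> (\<lambda>x. f x + g x) = (\<lambda>y. \<psi> f y + \<psi> g y)) \<and>
     (\<forall>c. \<forall>f\<in>A. \<psi> (\<lambda>x. c * f x) = (\<lambda>y. c * \<psi> f y)) \<and>
     (\<forall>f\<in>A. \<forall>g\<in>A. \<psi> (\<lambda>x. f x * g x) = (\<lambda>y. \<psi> f y * \<psi> g y))"

definition continuous_map_norms ::
  "('x \<Rightarrow> complex) set \<Rightarrow> (('x \<Rightarrow> complex) \<Rightarrow> real) \<Rightarrow> (('y \<Rightarrow> complex) \<Rightarrow> real)
    \<Rightarrow> (('x \<Rightarrow> complex) \<Rightarrow> ('y \<Rightarrow> complex)) \<Rightarrow> bool" where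
  "continuous_map_norms A nA nB \<psi> \<longleftrightarrow>
     (\<forall>f\<in>A. \<forall>e>0. \<exists>d>0. \<forall>g\<in>A. nA (\<lambda>x. g x - f x) < d \<longrightarrow>
        nB (\<lambda>y. \<psi> g y - \<psi> f y) < e)"

definition linear_functional :: "('x \<Rightarrow> complex) set \<Rightarrow> (('x \<Rightarrow> complex) \<Rightarrow> complex) \<Rightarrow> bool" where
  "linear_functional A L \<longleftrightarrow>
     (\<forall>f\<in>A. \<forall>g\<in>A. L (\<lambda>x. f x + g x) = L f + L g) \<and>
     (\<forall>c. \<forall>f\<in>A. L (\<lambda>x. c * f x) = c * L f)"

definition character_space :: "('x \<Rightarrow> complex) set \<Rightarrow> (('x \<Rightarrow> complex) \<Rightarrow> complex) set" where
  "character_space B = {\<phi>. linear_functional B \<phi> \<and>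
     (\<forall>f\<in>B. \<forall>g\<in>B. \<phi> (\<lambda>x. f x * g x) = \<phi> f * \<phi> g) \<and> (\<exists>f\<in>B. \<phi> f \<noteq> 0)}"

definition point_derivation ::
  "('x \<Rightarrow> complex) set \<Rightarrow> (('x \<Rightarrow> complex) \<Rightarrow> real) \<Rightarrow> (('y \<Rightarrow> complex) \<Rightarrow> complex)
    \<Rightarrow> (('x \<Rightarrow> complex) \<Rightarrow> ('y \<Rightarrow> complex)) \<Rightarrow> (('x \<Rightarrow> complex) \<Rightarrow> complex) \<Rightarrow> bool" where
  "point_derivation A nA \<phi> \<psi> D \<longleftrightarrow>
     linear_functional A D \<and> (\<exists>C. \<forall>f\<in>A. cmod (D f) \<le> C * nA f) \<and>
     (\<forall>a\<in>A. \<forall>b\<in>A. D (\<lambda>x. a x * b x) = \<phi> (\<psi> a) * D b + \<phi> (\<psi> b) * D a)"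

end

theory Submission
  imports Defs
begin

text \<open>Write \<open>\<theta> = \<phi> \<circ> \<psi>\<close>, a multiplicative linear
  functional on \<open>A\<close> with respect to which \<open>D\<close> satisfies the Leibniz rule. Then \<open>\<theta>(1)\<close> is
  idempotent; if \<open>\<theta>(1) = 0\<close> then \<open>\<theta>\<close> and \<open>D\<close> vanish. If \<open>\<theta>(1) = 1\<close>, the chain rule
  \<open>D(p(f)) = p'(\<theta>(f)) D(f)\<close> holds for every polynomial \<open>p\<close>. Since \<open>f\<close> takes its values among the
  roots of \<open>P\<close>, the polynomial \<open>R = (z - \<theta>(f)) Q\<close>, where \<open>Q\<close> is the product of \<open>z - r\<close> over
  the other roots \<open>r\<close>, satisfies \<open>R(f) = 0\<close>; hence \<open>0 = R'(\<theta>(f)) D(f) = Q(\<theta>(f)) D(f)\<close>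
  with \<open>Q(\<theta>(f)) \<noteq> 0\<close>.\<close>

locale function_algebra =
  fixes A :: "('x \<Rightarrow> complex) set"
  assumes const_mem: "(\<lambda>x. c) \<in> A"
    and add_mem: "f \<in> A \<Longrightarrow> g \<in> A \<Longrightarrow> (\<lambda>x. f x + g x) \<in> A"
    and mult_mem: "f \<in> A \<Longrightarrow> g \<in> A \<Longrightarrow> (\<lambda>x. f x * g x) \<in> A"
begin

lemma poly_comp_mem: "f \<in> A \<Longrightarrow> (\<lambda>x. poly p (f x)) \<in> A"
  by (induction p) (simp_all add: const_mem add_mem mult_mem)

end

lemma banach_function_algebra_imp_function_algebra:
  "banach_function_algebra A nA \<Longrightarrow> function_algebra A"
  unfolding banach_function_algebra_def function_algebra_def by blast

locale derivation_at_character = function_algebra A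
  for A :: "('x \<Rightarrow> complex) set" +
  fixes \<theta> D :: "('x \<Rightarrow> complex) \<Rightarrow> complex"
  assumes linear_\<theta>: "linear_functional A \<theta>"
    and mult_\<theta>: "f \<in> A \<Longrightarrow> g \<in> A \<Longrightarrow> \<theta> (\<lambda>x. f x * g x) = \<theta> f * \<theta> g"
    and linear_D: "linear_functional A D"
    and Leibniz: "f \<in> A \<Longrightarrow> g \<in> A \<Longrightarrow> D (\<lambda>x. f x * g x) = \<theta> f * D g + \<theta> g * D f"
begin

lemma add_\<theta>: "f \<in> A \<Longrightarrow> g \<in> A \<Longrightarrow> \<theta> (\<lambda>x. f x + g x) = \<theta> f + \<theta> g"
  and scale_\<theta>: "f \<in> A \<Longrightarrow> \<theta> (\<lambda>x. c * f x) = c * \<theta> f"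
  using linear_\<theta> unfolding linear_functional_def by blast+

lemma add_D: "f \<in> A \<Longrightarrow> g \<in> A \<Longrightarrow> D (\<lambda>x. f x + g x) = D f + D g"
  and scale_D: "f \<in> A \<Longrightarrow> D (\<lambda>x. c * f x) = c * D f"
  using linear_D unfolding linear_functional_def by blast+

lemma \<theta>_unit_cases: "\<theta> (\<lambda>x. 1) = 0 \<or> \<theta> (\<lambda>x. 1) = 1"
  using mult_\<theta>[OF const_mem const_mem, of 1 1] by (simp add: mult_cancel_left1)

lemma D_const: "D (\<lambda>x. c) = 0"
proof -
  have "D (\<lambda>x. 1) = 2 * \<theta> (\<lambda>x. 1) * D (\<lambda>x. 1)"
    using Leibniz[OF const_mem const_mem, of 1 1] by simp
  then have "D (\<lambda>x. 1) = 0"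
    using \<theta>_unit_cases by auto
  then show ?thesis
    using scale_D[OF const_mem, of c 1] by simp
qed

lemma D_eq_0_of_\<theta>_unit_eq_0:
  assumes "\<theta> (\<lambda>x. 1) = 0" and "f \<in> A"
  shows "D f = 0"
proof -
  have "\<theta> f = 0"
    using mult_\<theta>[OF \<open>f \<in> A\<close> const_mem, of 1] assms(1) by simp
  then show ?thesis
    using Leibniz[OF \<open>f \<in> A\<close> const_mem, of 1] assms(1) by simp
qed

context
  assumes \<theta>_unit: "\<theta> (\<lambda>x. 1) = 1"
begin

lemma \<theta>_const: "\<theta> (\<lambda>x. c) = c"
  using scale_\<theta>[OF const_mem, of c 1] \<theta>_unit by simp

lemma \<theta>_poly_comp: "f \<in> A \<Longrightarrow> \<theta> (\<lambda>x. poly p (f x)) = poly p (\<theta> f)"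
proof (induction p)
  case (pCons a p)
  then show ?case
    by (simp add: add_\<theta> mult_\<theta> const_mem mult_mem poly_comp_mem \<theta>_const)
qed (simp add: \<theta>_const)

lemma D_poly_comp:
  "f \<in> A \<Longrightarrow> D (\<lambda>x. poly p (f x)) = poly (pderiv p) (\<theta> f) * D f"
proof (induction p)
  case (pCons a p)
  then show ?case
    by (simp add: add_D Leibniz const_mem mult_mem poly_comp_mem D_const \<theta>_poly_comp
        pderiv_pCons algebra_simps)
qed (simp add: D_const)

end

lemma D_eq_0_of_poly_comp_eq_0:
  assumes "f \<in> A" and "P \<noteq> 0" and "\<And>x. poly P (f x) = 0"
  shows "D f = 0"
proof (cases "\<theta> (\<lambda>x. 1) = 1")
  case False
  then show ?thesis
    using \<theta>_unit_cases D_eq_0_of_\<theta>_unit_eq_0 \<open>f \<in> A\<close> by blast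
next
  case True
  define l where "l = \<theta> f"
  define S where "S = {r. poly P r = 0} - {l}"
  define Q where "Q = (\<Prod>r\<in>S. [:-r, 1:])"
  have "finite S"
    using poly_roots_finite[OF \<open>P \<noteq> 0\<close>] unfolding S_def by simp
  have poly_Q: "poly Q z = (\<Prod>r\<in>S. z - r)" for z
    unfolding Q_def by (simp add: poly_prod)
  have "poly Q l \<noteq> 0"
    using \<open>finite S\<close> unfolding poly_Q S_def by simp
  have "poly ([:-l, 1:] * Q) (f x) = 0" for x
  proof (cases "f x = l")
    case False
    then have "f x \<in> S"
      using assms(3) unfolding S_def by simp
    then show ?thesis
      using \<open>finite S\<close> by (simp add: poly_Q)
  qed simp
  then have "0 = D (\<lambda>x. poly ([:-l, 1:] * Q) (f x))"
    using D_const[of 0] by presburger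
  also have "\<dots> = poly (pderiv ([:-l, 1:] * Q)) l * D f"
    unfolding l_def by (rule D_poly_comp[OF True \<open>f \<in> A\<close>])
  also have "\<dots> = poly Q l * D f"
    unfolding pderiv_mult by (simp add: pderiv_pCons)
  finally show ?thesis
    using \<open>poly Q l \<noteq> 0\<close> by simp
qed

end

lemma derivation_at_character_comp:
  assumes "function_algebra A" and "\<forall>a\<in>A. \<psi> a \<in> B" and "alg_hom A \<psi>"
    and "\<phi> \<in> character_space B" and "point_derivation A nA \<phi> \<psi> D"
  shows "derivation_at_character A (\<lambda>a. \<phi> (\<psi> a)) D"
proof -
  interpret function_algebra A by fact
  show ?thesis
    using assms(2-5)
    by unfold_locales
      (auto simp: alg_hom_def character_space_def linear_functional_def point_derivation_def)
qed

theorem proposition2p5: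
  fixes A :: "('x \<Rightarrow> complex) set" and nA :: "('x \<Rightarrow> complex) \<Rightarrow> real"
    and B :: "('x \<Rightarrow> complex) set" and nB :: "('x \<Rightarrow> complex) \<Rightarrow> real"
    and \<psi> :: "('x \<Rightarrow> complex) \<Rightarrow> ('x \<Rightarrow> complex)"
    and \<phi> :: "('x \<Rightarrow> complex) \<Rightarrow> complex"
    and D :: "('x \<Rightarrow> complex) \<Rightarrow> complex"
    and f :: "'x \<Rightarrow> complex" and P :: "complex poly"
  assumes "banach_function_algebra A nA"
    and "banach_function_algebra B nB"
    and "\<forall>a\<in>A. \<psi> a \<in> B"
    and "alg_hom A \<psi>"
    and "continuous_map_norms A nA nB \<psi>"
    and "\<phi> \<in> character_space B"
    and "f \<in> A"
    and "P \<noteq> 0"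
    and "(\<lambda>x. poly P (f x)) = (\<lambda>x. 0)"
    and "point_derivation A nA \<phi> \<psi> D"
  shows "D f = 0"
proof -
  interpret derivation_at_character A "\<lambda>a. \<phi> (\<psi> a)" D
    using derivation_at_character_comp banach_function_algebra_imp_function_algebra assms
    by blast
  show ?thesis
    using D_eq_0_of_poly_comp_eq_0 assms(7-9) by meson
qed

end
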